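(* Let $X$ be a collectionwise normal space and $\mathcal{U}$ an open cover of $X$. Then $X$ admits a $\mathcal{U}$-small partition of unity if and only if $\mathcal{U}$ has a $\sigma$-discrete closed refinement.
   Context: $X$ is collectionwise normal if it is $T_1$ and for every discrete family $\{A_s\}_{s\in S}$ of closed sets there is a discrete family $\{U_s\}_{s\in S}$ of open sets with $A_s\subset U_s$ for all $s$. A family of subsets is discrete if each point has a neighborhood meeting at most one member; $\sigma$-discrete means a countable union of discrete families. A closed refinement of $\mathcal{U}$ is a cover by closed sets each contained in some element of $\mathcal{U}$. A partition of unity on $X$ indexed by a nonempty set $T$ is a family $\{f_t\}_{t\in T}$ of functions $f_t:X\to[0,1]$ with $\sum_{t}f_t(x)=1$ for all $x$, such that the induced map $X\to l_1(T)$ is continuous for the $l_1$-norm; it is $\mathcal{U}$-small if each carrier $f_t^{-1}((0,1])$ is contained in some element of $\mathcal{U}$. *)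

theory Defs
  imports "HOL-Analysis.Analysis"
begin

definition discrete_family :: "'a topology \<Rightarrow> 's set \<Rightarrow> ('s \<Rightarrow> 'a set) \<Rightarrow> bool" where
  "discrete_family X S A \<longleftrightarrow>
     (\<forall>x\<in>topspace X. \<exists>V. openin X V \<and> x \<in> V \<and>
        (\<forall>s\<in>S. \<forall>t\<in>S. A s \<inter> V \<noteq> {} \<and> A t \<inter> V \<noteq> {} \<longrightarrow> s = t))"

definition discrete_collection :: "'a topology \<Rightarrow> 'a set set \<Rightarrow> bool" where
  "discrete_collection X \<F> \<longleftrightarrow> discrete_family X \<F> id"

definition sigma_discrete :: "'a topology \<Rightarrow> 'a set set \<Rightarrow> bool" where
  "sigma_discrete X \<F> \<longleftrightarrow>
     (\<exists>G :: nat \<Rightarrow> 'a set set. \<F> = (\<Union>n. G n) \<and> (\<forall>n. discrete_collection X (G n)))"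

definition collectionwise_normal :: "'a topology \<Rightarrow> bool" where
  "collectionwise_normal X \<longleftrightarrow> t1_space X \<and>
     (\<forall>\<A>. (\<forall>A\<in>\<A>. closedin X A) \<and> discrete_collection X \<A> \<longrightarrow>
        (\<exists>U. (\<forall>A\<in>\<A>. openin X (U A) \<and> A \<subseteq> U A) \<and> discrete_family X \<A> U))"

definition open_cover :: "'a topology \<Rightarrow> 'a set set \<Rightarrow> bool" where
  "open_cover X \<U> \<longleftrightarrow> (\<forall>U\<in>\<U>. openin X U) \<and> \<Union>\<U> = topspace X"

definition closed_refinement :: "'a topology \<Rightarrow> 'a set set \<Rightarrow> 'a set set \<Rightarrow> bool" where
  "closed_refinement X \<F> \<U> \<longleftrightarrow>
     (\<forall>F\<in>\<F>. closedin X F \<and> (\<exists>U\<in>\<U>. F \<subseteq> U)) \<and> \<Union>\<F> = topspace X"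

text \<open>l1 distance between the points of l1(T) induced at x and y.\<close>
definition l1_dist :: "'i set \<Rightarrow> ('i \<Rightarrow> 'a \<Rightarrow> real) \<Rightarrow> 'a \<Rightarrow> 'a \<Rightarrow> real" where
  "l1_dist T f x y = (\<Sum>\<^sub>\<infinity>t\<in>T. \<bar>f t x - f t y\<bar>)"

definition partition_of_unity :: "'a topology \<Rightarrow> 'i set \<Rightarrow> ('i \<Rightarrow> 'a \<Rightarrow> real) \<Rightarrow> bool" where
  "partition_of_unity X T f \<longleftrightarrow> T \<noteq> {} \<and>
     (\<forall>t\<in>T. \<forall>x\<in>topspace X. 0 \<le> f t x \<and> f t x \<le> 1) \<and>
     (\<forall>x\<in>topspace X. ((\<lambda>t. f t x) has_sum 1) T) \<and>
     (\<forall>x0\<in>topspace X. \<forall>e>0. \<exists>V. openin X V \<and> x0 \<in> V \<and>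
        (\<forall>x\<in>V. l1_dist T f x x0 < e))"

definition carrier_pou :: "'a topology \<Rightarrow> ('a \<Rightarrow> real) \<Rightarrow> 'a set" where
  "carrier_pou X g = {x\<in>topspace X. 0 < g x}"

definition small_partition_of_unity ::
    "'a topology \<Rightarrow> 'a set set \<Rightarrow> 'i set \<Rightarrow> ('i \<Rightarrow> 'a \<Rightarrow> real) \<Rightarrow> bool" where
  "small_partition_of_unity X \<U> T f \<longleftrightarrow> partition_of_unity X T f \<and>
     (\<forall>t\<in>T. \<exists>U\<in>\<U>. carrier_pou X (f t) \<subseteq> U)"

end

theory Submission
  imports Defs
begin

text \<open>Given a partition of unity \<open>f\<close>, call a finite nonempty index set \<open>S\<close> \<open>r\<close>-dominant at
  \<open>x\<close> if each \<open>f s x\<close> with \<open>s \<in> S\<close> is at least \<open>r\<close> and exceeds each \<open>f t x\<close> with \<open>t \<notin> S\<close> by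
  at least \<open>r\<close>. The points at which \<open>S\<close> is \<open>r\<close>-dominant form a closed set inside the carrier
  of every \<open>f s\<close>, \<open>s \<in> S\<close>. Two such sets with different \<open>S\<close> of the same size are
  \<open>l\<^sub>1\<close>-far apart, so for fixed \<open>|S|\<close> and \<open>r\<close> they form a discrete family; and every point has
  a dominant set, namely the indices of its largest values.

  Conversely, write the refinement as \<open>\<Union>\<^sub>n G\<^sub>n\<close> with \<open>G\<^sub>n\<close> discrete and let \<open>F\<close> have level
  \<open>n\<close> if \<open>n\<close> is least with \<open>F \<in> G\<^sub>n\<close>. Collectionwise normality expands each level to a discrete
  open family inside members of \<open>\<U>\<close>, and Urysohn's lemma yields bumps \<open>\<phi>\<^sub>F\<close>; on each level
  their sum \<open>\<Phi>\<^sub>n\<close> is locally a single bump. The functions \<open>\<phi>\<^sub>F \<Prod>\<^sub>m\<^sub><\<^sub>n (1 - \<Phi>\<^sub>m)\<close> for \<open>F\<close> of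
  level \<open>n\<close> telescope to 1 at every point, because the product vanishes beyond the level of
  any set containing the point. Finally, Scheff\'e's lemma turns the continuity of the
  individual functions of a nonnegative family with sum 1 into \<open>l\<^sub>1\<close>-continuity.\<close>

lemma continuous_map_real_iff_near:
  "continuous_map X euclideanreal h \<longleftrightarrow>
    (\<forall>x0\<in>topspace X. \<forall>e>0. \<exists>V. openin X V \<and> x0 \<in> V \<and> (\<forall>x\<in>V. \<bar>h x - h x0\<bar> < e))"
  using Met_TC.continuous_map_to_metric[of X h] by (simp add: dist_real_def abs_minus_commute)

lemma continuous_map_locally_eq:
  assumes "\<And>x. x \<in> topspace X \<Longrightarrow>
     \<exists>U g. openin X U \<and> x \<in> U \<and> continuous_map X Y g \<and> (\<forall>y\<in>U. f y = g y)"
  shows "continuous_map X Y f"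
  unfolding continuous_map_atin
proof
  fix x assume x: "x \<in> topspace X"
  then obtain U g where U: "openin X U" "x \<in> U" "continuous_map X Y g" "\<forall>y\<in>U. f y = g y"
    using assms by blast
  have "eventually (\<lambda>y. g y = f y) (atin X x)"
    unfolding eventually_atin using U by auto
  moreover have "limitin Y g (f x) (atin X x)"
    using limitin_continuous_map[OF U(3) x] U(2,4) by simp
  ultimately show "limitin Y f (f x) (atin X x)"
    by (rule limitin_transform_eventually)
qed

lemma normal_space_Urysohn_bump:
  assumes "normal_space X" "closedin X F" "openin X W" "F \<subseteq> W"
  shows "\<exists>\<phi>. continuous_map X euclideanreal \<phi> \<and> (\<forall>x\<in>topspace X. 0 \<le> \<phi> x \<and> \<phi> x \<le> 1) \<and>
    (\<forall>x\<in>F. \<phi> x = 1) \<and> (\<forall>x\<in>topspace X - W. \<phi> x = 0)"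
proof -
  have "closedin X (topspace X - W)" "disjnt (topspace X - W) F"
    using assms by (auto simp: disjnt_def)
  then obtain \<phi> where \<phi>: "continuous_map X (top_of_set {0..1::real}) \<phi>"
      "\<phi> ` (topspace X - W) \<subseteq> {0}" "\<phi> ` F \<subseteq> {1}"
    using Urysohn_lemma[OF assms(1) _ assms(2)] by (metis zero_le_one)
  have "continuous_map X euclideanreal \<phi>"
    using \<phi>(1) continuous_map_in_subtopology by blast
  moreover have "0 \<le> \<phi> x \<and> \<phi> x \<le> 1" if "x \<in> topspace X" for x
    using \<phi>(1) that continuous_map_image_subset_topspace by fastforce
  ultimately show ?thesis
    using \<phi>(2,3) by (intro exI[of _ \<phi>]) auto
qed

lemma abs_diff_summable_on:
  fixes a b :: "'i \<Rightarrow> real"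
  assumes "a summable_on T" "b summable_on T"
  shows "(\<lambda>t. \<bar>a t - b t\<bar>) summable_on T"
proof -
  have "(\<lambda>t. a t + - b t) summable_on T"
    using summable_on_add[OF assms(1)] summable_on_uminus[of b T] assms(2) by blast
  then show ?thesis
    using summable_on_iff_abs_summable_on_real[of "\<lambda>t. a t - b t" T] by simp
qed

lemma infsum_abs_diff_le:
  fixes a b :: "'i \<Rightarrow> real"
  assumes a: "(a has_sum s) T" and b: "(b has_sum s) T"
    and nonneg: "\<And>t. t \<in> T \<Longrightarrow> 0 \<le> a t" "\<And>t. t \<in> T \<Longrightarrow> 0 \<le> b t"
    and C: "finite C" "C \<subseteq> T"
  shows "(\<Sum>\<^sub>\<infinity>t\<in>T. \<bar>a t - b t\<bar>) \<le> 2 * (\<Sum>t\<in>C. \<bar>a t - b t\<bar>) + 2 * (\<Sum>\<^sub>\<infinity>t\<in>T - C. b t)"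
proof -
  have sa: "a summable_on T" and sb: "b summable_on T"
    using a b by (auto simp: summable_on_def)
  have sd: "(\<lambda>t. \<bar>a t - b t\<bar>) summable_on T"
    using abs_diff_summable_on[OF sa sb] .
  have tail_summable: "a summable_on T - C" "b summable_on T - C"
    "(\<lambda>t. \<bar>a t - b t\<bar>) summable_on T - C"
    using sa sb sd by (auto intro: summable_on_subset_banach)
  have "(\<Sum>\<^sub>\<infinity>t\<in>T. \<bar>a t - b t\<bar>) = (\<Sum>t\<in>C. \<bar>a t - b t\<bar>) + (\<Sum>\<^sub>\<infinity>t\<in>T - C. \<bar>a t - b t\<bar>)"
    using infsum_Diff[OF sd _ C(2)] C(1) by simp
  moreover have "(\<Sum>\<^sub>\<infinity>t\<in>T - C. \<bar>a t - b t\<bar>) \<le> (\<Sum>\<^sub>\<infinity>t\<in>T - C. a t + b t)"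
    by (rule infsum_mono[OF tail_summable(3) summable_on_add[OF tail_summable(1,2)]])
      (use nonneg in \<open>auto simp: abs_le_iff\<close>)
  moreover have "(\<Sum>\<^sub>\<infinity>t\<in>T - C. a t + b t) = (\<Sum>\<^sub>\<infinity>t\<in>T - C. a t) + (\<Sum>\<^sub>\<infinity>t\<in>T - C. b t)"
    by (rule infsum_add[OF tail_summable(1,2)])
  moreover have "(\<Sum>\<^sub>\<infinity>t\<in>T - C. a t) = s - sum a C" "(\<Sum>\<^sub>\<infinity>t\<in>T - C. b t) = s - sum b C"
    using infsum_Diff[OF sa _ C(2)] infsum_Diff[OF sb _ C(2)] a b C(1) by (simp_all add: infsumI)
  moreover have "sum b C - sum a C \<le> (\<Sum>t\<in>C. \<bar>a t - b t\<bar>)"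
    unfolding sum_subtractf[symmetric] by (rule sum_mono) simp
  ultimately show ?thesis
    by linarith
qed

lemma partition_of_unityI:
  assumes "T \<noteq> {}"
    and cont: "\<And>t. t \<in> T \<Longrightarrow> continuous_map X euclideanreal (f t)"
    and nonneg: "\<And>t x. t \<in> T \<Longrightarrow> x \<in> topspace X \<Longrightarrow> 0 \<le> f t x"
    and sum: "\<And>x. x \<in> topspace X \<Longrightarrow> ((\<lambda>t. f t x) has_sum 1) T"
  shows "partition_of_unity X T f"
  unfolding partition_of_unity_def
proof (intro conjI ballI allI impI)
  fix t x assume t: "t \<in> T" and x: "x \<in> topspace X"
  show "f t x \<le> 1"
    using finite_sum_le_infsum[of "\<lambda>t. f t x" T "{t}"] sum[OF x] nonneg[OF _ x] t
    by (auto simp: summable_on_def infsumI)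
next
  fix x0 and e :: real assume x0: "x0 \<in> topspace X" and e: "e > 0"
  obtain C where C: "finite C" "C \<subseteq> T" "dist (\<Sum>t\<in>C. f t x0) 1 \<le> e/8"
    using has_sum_finite_approximation[OF sum[OF x0]] e by (metis zero_less_divide_iff zero_less_numeral)
  have summable: "(\<lambda>t. f t x0) summable_on T"
    using sum[OF x0] by (auto simp: summable_on_def)
  have "(\<Sum>\<^sub>\<infinity>t\<in>T - C. f t x0) = 1 - (\<Sum>t\<in>C. f t x0)"
    using infsum_Diff[OF summable summable_on_finite[OF C(1)] C(2)] infsumI[OF sum[OF x0]] C(1) by simp
  then have tail: "(\<Sum>\<^sub>\<infinity>t\<in>T - C. f t x0) \<le> e/8"
    using C(3) unfolding dist_real_def abs_le_iff by linarith
  define g where "g x = (\<Sum>t\<in>C. \<bar>f t x - f t x0\<bar>)" for x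
  have "continuous_map X euclideanreal g"
    unfolding g_def using cont C(1,2) by (intro continuous_intros) auto
  then have "openin X {x\<in>topspace X. g x \<in> {..<e/4}}"
    by (rule openin_continuous_map_preimage) simp
  moreover have "l1_dist T f x x0 < e" if "x \<in> topspace X" "g x < e/4" for x
  proof -
    have "l1_dist T f x x0 \<le> 2 * g x + 2 * (\<Sum>\<^sub>\<infinity>t\<in>T - C. f t x0)"
      unfolding l1_dist_def g_def
      by (rule infsum_abs_diff_le[OF sum sum]) (use nonneg C that x0 in auto)
    then show ?thesis
      using tail that(2) e by linarith
  qed
  ultimately show "\<exists>V. openin X V \<and> x0 \<in> V \<and> (\<forall>x\<in>V. l1_dist T f x x0 < e)"
    using x0 e by (intro exI[of _ "{x\<in>topspace X. g x \<in> {..<e/4}}"]) (auto simp: g_def)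
qed (use assms in auto)

lemma partition_of_unity_has_sum:
  "partition_of_unity X T f \<Longrightarrow> x \<in> topspace X \<Longrightarrow> ((\<lambda>t. f t x) has_sum 1) T"
  unfolding partition_of_unity_def by blast

lemma abs_diff_le_l1_dist:
  assumes P: "partition_of_unity X T f" and x: "x \<in> topspace X" and y: "y \<in> topspace X"
    and t: "t \<in> T"
  shows "\<bar>f t x - f t y\<bar> \<le> l1_dist T f x y"
proof -
  have "(\<lambda>t. \<bar>f t x - f t y\<bar>) summable_on T"
    using partition_of_unity_has_sum[OF P] x y by (intro abs_diff_summable_on) (auto simp: summable_on_def)
  then show ?thesis
    unfolding l1_dist_def using finite_sum_le_infsum[of "\<lambda>t. \<bar>f t x - f t y\<bar>" T "{t}"] t by simp
qed

lemma partition_of_unity_uniformly_near: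
  assumes P: "partition_of_unity X T f" and x0: "x0 \<in> topspace X" and e: "e > 0"
  obtains V where "openin X V" "x0 \<in> V"
    "\<And>x t. x \<in> V \<Longrightarrow> t \<in> T \<Longrightarrow> \<bar>f t x - f t x0\<bar> < e"
proof -
  obtain V where V: "openin X V" "x0 \<in> V" "\<forall>x\<in>V. l1_dist T f x x0 < e"
    using P x0 e unfolding partition_of_unity_def by blast
  show ?thesis
  proof (rule that[OF V(1,2)])
    fix x t assume "x \<in> V" "t \<in> T"
    then show "\<bar>f t x - f t x0\<bar> < e"
      using abs_diff_le_l1_dist[OF P _ x0] V openin_subset by fastforce
  qed
qed

lemma continuous_map_partition_of_unity:
  assumes "partition_of_unity X T f" "t \<in> T"
  shows "continuous_map X euclideanreal (f t)"
  unfolding continuous_map_real_iff_near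
  by (metis assms partition_of_unity_uniformly_near)

lemma finite_terms_ge:
  fixes a :: "'i \<Rightarrow> real"
  assumes "a summable_on T" "\<And>t. t \<in> T \<Longrightarrow> 0 \<le> a t" "c > 0"
  shows "finite {t\<in>T. c \<le> a t}"
proof (rule ccontr)
  assume "infinite {t\<in>T. c \<le> a t}"
  obtain N :: nat where N: "infsum a T / c < real N"
    using reals_Archimedean2 by blast
  obtain F where F: "finite F" "card F = N" "F \<subseteq> {t\<in>T. c \<le> a t}"
    using infinite_arbitrarily_large[OF \<open>infinite _\<close>] by blast
  have "real N * c \<le> sum a F"
    using sum_mono[of F "\<lambda>_. c" a] F by auto
  also have "\<dots> \<le> infsum a T"
    using F assms by (intro finite_sum_le_infsum) auto
  finally show False
    using N \<open>c > 0\<close> by (simp add: field_simps)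
qed

lemma dominant_terms_exist:
  fixes a :: "'i \<Rightarrow> real"
  assumes summable: "a summable_on T" and nonneg: "\<And>t. t \<in> T \<Longrightarrow> 0 \<le> a t"
    and pos: "0 < infsum a T"
  obtains S r where "finite S" "S \<noteq> {}" "S \<subseteq> T" "r > 0"
    "\<And>s. s \<in> S \<Longrightarrow> r \<le> a s" "\<And>s t. s \<in> S \<Longrightarrow> t \<in> T - S \<Longrightarrow> r \<le> a s - a t"
proof -
  obtain t0 where t0: "t0 \<in> T" "0 < a t0"
    using infsum_0[of T a] pos nonneg by force
  define c where "c = a t0 / 2"
  define A where "A = {t\<in>T. c \<le> a t}"
  define m where "m = Max (a ` A)"
  define S where "S = {t\<in>A. a t = m}"
  define M where "M = Max (insert c (a ` (A - S)))"
  have c: "0 < c" "c < a t0"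
    using t0 by (auto simp: c_def)
  have A: "finite A" "t0 \<in> A"
    using finite_terms_ge[OF summable nonneg c(1)] c t0 by (auto simp: A_def)
  have "m \<in> a ` A"
    unfolding m_def using A by (intro Max_in) auto
  then have "S \<noteq> {}"
    by (auto simp: S_def)
  have le_m: "a t \<le> m" if "t \<in> A" for t
    using A(1) that by (simp add: m_def)
  have "c \<le> M"
    using A(1) by (simp add: M_def)
  have "b < m" if "b \<in> insert c (a ` (A - S))" for b
    using that c le_m[of t0] A le_m by (force simp: S_def le_less)
  then have "M < m"
    unfolding M_def using A(1) by (subst Max_less_iff) auto
  have le_M: "a t \<le> M" if "t \<in> T - S" for t
  proof (cases "t \<in> A")
    case True
    then show ?thesis
      using that A(1) by (simp add: M_def)
  next
    case False
    then show ?thesis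
      using that \<open>c \<le> M\<close> by (auto simp: A_def)
  qed
  show ?thesis
  proof (rule that[of S "m - M"])
    show "finite S"
      using A(1) by (simp add: S_def)
    show "S \<subseteq> T"
      by (auto simp: S_def A_def)
  next
    fix s assume "s \<in> S"
    then have "a s = m"
      by (simp add: S_def)
    then show "m - M \<le> a s" "\<And>t. t \<in> T - S \<Longrightarrow> m - M \<le> a s - a t"
      using \<open>c \<le> M\<close> c le_M by force+
  qed (use \<open>S \<noteq> {}\<close> \<open>M < m\<close> in auto)
qed

definition dominance_set ::
    "'a topology \<Rightarrow> 'i set \<Rightarrow> ('i \<Rightarrow> 'a \<Rightarrow> real) \<Rightarrow> 'i set \<Rightarrow> real \<Rightarrow> 'a set" where
  "dominance_set X T f S r =
     {x\<in>topspace X. \<forall>s\<in>S. r \<le> f s x \<and> (\<forall>t\<in>T - S. r \<le> f s x - f t x)}"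

lemma dominance_set_antimono:
  "r' \<le> r \<Longrightarrow> dominance_set X T f S r \<subseteq> dominance_set X T f S r'"
  by (force simp: dominance_set_def)

lemma dominance_set_subset_carrier:
  "s \<in> S \<Longrightarrow> r > 0 \<Longrightarrow> dominance_set X T f S r \<subseteq> carrier_pou X (f s)"
  by (force simp: dominance_set_def carrier_pou_def)

lemma closedin_dominance_set:
  assumes P: "partition_of_unity X T f" and "S \<subseteq> T"
  shows "closedin X (dominance_set X T f S r)"
proof -
  have closed_superlevel: "closedin X {x\<in>topspace X. r \<le> g x}"
    if "continuous_map X euclideanreal g" for g
    using closedin_continuous_map_preimage[OF that, of "{r..}"] by simp
  define \<C> where "\<C> = {{x\<in>topspace X. r \<le> f s x} | s. s \<in> S} \<union>
     {{x\<in>topspace X. r \<le> f s x - f t x} | s t. s \<in> S \<and> t \<in> T - S}"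
  have "dominance_set X T f S r = \<Inter> (insert (topspace X) \<C>)"
    by (auto simp: dominance_set_def \<C>_def)
  moreover have "closedin X C" if "C \<in> insert (topspace X) \<C>" for C
    using that assms(2) continuous_map_partition_of_unity[OF P]
    by (auto simp: \<C>_def intro!: closed_superlevel continuous_map_diff)
  ultimately show ?thesis
    by (metis closedin_Inter insert_not_empty)
qed

lemma dominance_sets_same_size_eq:
  assumes S: "finite S" "finite S'" "card S = card S'" "S \<subseteq> T" "S' \<subseteq> T"
    and x: "x \<in> dominance_set X T f S r" and y: "y \<in> dominance_set X T f S' r"
    and near: "\<And>t. t \<in> T \<Longrightarrow> \<bar>f t x - f t y\<bar> < r / 2"
  shows "S = S'"
proof (rule ccontr)
  assume "S \<noteq> S'"
  then have "\<not> S \<subseteq> S'" "\<not> S' \<subseteq> S"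
    using card_subset_eq[OF S(2) _ S(3)] card_subset_eq[OF S(1) _ S(3)[symmetric]] by auto
  then obtain s s' where s: "s \<in> S" "s \<notin> S'" and s': "s' \<in> S'" "s' \<notin> S"
    by blast
  have "r \<le> f s x - f s' x" "r \<le> f s' y - f s y"
    using x y s s' S by (auto simp: dominance_set_def)
  moreover have "\<bar>f s x - f s y\<bar> < r / 2" "\<bar>f s' x - f s' y\<bar> < r / 2"
    using near s(1) s'(1) S by auto
  ultimately show False
    by linarith
qed

lemma discrete_collection_dominance_sets:
  fixes n :: nat
  assumes P: "partition_of_unity X T f" and r: "r > 0"
  defines "\<D> \<equiv> {dominance_set X T f S r | S. S \<subseteq> T \<and> finite S \<and> card S = n}"
  shows "discrete_collection X \<D>"
  unfolding discrete_collection_def discrete_family_def id_def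
proof
  fix x0 assume x0: "x0 \<in> topspace X"
  obtain V where V: "openin X V" "x0 \<in> V"
    "\<And>x t. x \<in> V \<Longrightarrow> t \<in> T \<Longrightarrow> \<bar>f t x - f t x0\<bar> < r / 4"
    using partition_of_unity_uniformly_near[OF P x0] r by (metis zero_less_divide_iff zero_less_numeral)
  have "A = B" if AB: "A \<in> \<D>" "B \<in> \<D>" and meet: "A \<inter> V \<noteq> {}" "B \<inter> V \<noteq> {}" for A B
  proof -
    obtain S where S: "A = dominance_set X T f S r" "S \<subseteq> T" "finite S" "card S = n"
      using AB(1) unfolding \<D>_def by blast
    obtain S' where S': "B = dominance_set X T f S' r" "S' \<subseteq> T" "finite S'" "card S' = n"
      using AB(2) unfolding \<D>_def by blast
    obtain x y where x: "x \<in> A" "x \<in> V" and y: "y \<in> B" "y \<in> V"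
      using meet by blast
    have near: "\<bar>f t x - f t y\<bar> < r / 2" if "t \<in> T" for t
      using V(3)[OF x(2) that] V(3)[OF y(2) that] by linarith
    have "card S = card S'"
      using S(4) S'(4) by simp
    with x(1) y(1) have "S = S'"
      using dominance_sets_same_size_eq[where X=X and f=f and r=r, OF S(3) S'(3) _ S(2) S'(2) _ _ near]
        S(1) S'(1) by blast
    then show "A = B"
      using S(1) S'(1) by simp
  qed
  then show "\<exists>V. openin X V \<and> x0 \<in> V \<and>
      (\<forall>A\<in>\<D>. \<forall>B\<in>\<D>. A \<inter> V \<noteq> {} \<and> B \<inter> V \<noteq> {} \<longrightarrow> A = B)"
    using V(1,2) by blast
qed

lemma dominance_sets_cover:
  assumes P: "partition_of_unity X T f" and x: "x \<in> topspace X"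
  obtains S k where "finite S" "S \<noteq> {}" "S \<subseteq> T" "x \<in> dominance_set X T f S (1 / real (Suc k))"
proof -
  have sum: "((\<lambda>t. f t x) has_sum 1) T"
    using partition_of_unity_has_sum[OF P x] .
  then have summable: "(\<lambda>t. f t x) summable_on T"
    by (auto simp: summable_on_def)
  have nonneg: "\<And>t. t \<in> T \<Longrightarrow> 0 \<le> f t x"
    using P x unfolding partition_of_unity_def by blast
  obtain S r where S: "finite S" "S \<noteq> {}" "S \<subseteq> T" "r > 0"
    "\<And>s. s \<in> S \<Longrightarrow> r \<le> f s x" "\<And>s t. s \<in> S \<Longrightarrow> t \<in> T - S \<Longrightarrow> r \<le> f s x - f t x"
    using dominant_terms_exist[OF summable nonneg] infsumI[OF sum] by auto
  obtain k where "1 / real (Suc k) < r"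
    using reals_Archimedean[OF \<open>r > 0\<close>] by (auto simp: inverse_eq_divide)
  moreover have "x \<in> dominance_set X T f S r"
    using S x by (simp add: dominance_set_def)
  ultimately show ?thesis
    using that[OF S(1-3)] dominance_set_antimono[of "1 / real (Suc k)" r]
    by (meson less_imp_le subsetD)
qed

lemma sigma_discrete_UN2:
  fixes \<D> :: "nat \<Rightarrow> nat \<Rightarrow> 'a set set"
  assumes "\<And>i k. discrete_collection X (\<D> i k)"
  shows "sigma_discrete X (\<Union>i k. \<D> i k)"
  unfolding sigma_discrete_def
proof (intro exI conjI allI)
  have "\<D> i k = \<D> (fst (prod_decode (prod_encode (i, k)))) (snd (prod_decode (prod_encode (i, k))))" for i k
    by simp
  then show "(\<Union>i k. \<D> i k) = (\<Union>n. \<D> (fst (prod_decode n)) (snd (prod_decode n)))"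
    by blast
  show "discrete_collection X (\<D> (fst (prod_decode n)) (snd (prod_decode n)))" for n
    by (rule assms)
qed

theorem sigma_discrete_closed_refinement_if_small_partition_of_unity:
  assumes "small_partition_of_unity X \<U> T f"
  shows "\<exists>\<F>. closed_refinement X \<F> \<U> \<and> sigma_discrete X \<F>"
proof -
  have P: "partition_of_unity X T f"
    and small: "\<And>t. t \<in> T \<Longrightarrow> \<exists>U\<in>\<U>. carrier_pou X (f t) \<subseteq> U"
    using assms unfolding small_partition_of_unity_def by blast+
  \<comment> \<open>\<open>card S = Suc i\<close> rules out \<open>S = {}\<close>, whose dominance set is all of \<open>X\<close>.\<close>
  define \<D> where "\<D> i k = {dominance_set X T f S (1 / real (Suc k)) | S.
      S \<subseteq> T \<and> finite S \<and> card S = Suc i}" for i k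
  have member: "closedin X D \<and> (\<exists>U\<in>\<U>. D \<subseteq> U)" if D: "D \<in> (\<Union>i k. \<D> i k)" for D
  proof -
    obtain i k S where S: "D = dominance_set X T f S (1 / real (Suc k))" "S \<subseteq> T" "card S = Suc i"
      using D unfolding \<D>_def by blast
    then obtain s where s: "s \<in> S"
      by (metis card.empty ex_in_conv nat.distinct(1))
    then obtain U where U: "U \<in> \<U>" "carrier_pou X (f s) \<subseteq> U"
      using small S(2) by blast
    have "D \<subseteq> carrier_pou X (f s)"
      using dominance_set_subset_carrier[OF s, where X=X and T=T and f=f] S(1) by simp
    with U(2) have "D \<subseteq> U"
      by blast
    then show ?thesis
      using closedin_dominance_set[OF P S(2)] S(1) U(1) by blast
  qed
  have "x \<in> \<Union>(\<Union>i k. \<D> i k)" if x: "x \<in> topspace X" for x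
  proof -
    obtain S k where S: "finite S" "S \<noteq> {}" "S \<subseteq> T"
      "x \<in> dominance_set X T f S (1 / real (Suc k))"
      using dominance_sets_cover[OF P x] .
    have "card S = Suc (card S - 1)"
      using S(1,2) by (simp add: card_gt_0_iff)
    then have "dominance_set X T f S (1 / real (Suc k)) \<in> \<D> (card S - 1) k"
      unfolding \<D>_def using S(1,3) by blast
    then show ?thesis
      using S(4) by blast
  qed
  then have "closed_refinement X (\<Union>i k. \<D> i k) \<U>"
    unfolding closed_refinement_def using member closedin_subset by blast
  moreover have "sigma_discrete X (\<Union>i k. \<D> i k)"
    unfolding \<D>_def by (intro sigma_discrete_UN2 discrete_collection_dominance_sets[OF P]) simp
  ultimately show ?thesis
    by blast
qed

lemma discrete_family_shrink:
  assumes "discrete_family X S A" "S' \<subseteq> S" "\<And>s. s \<in> S' \<Longrightarrow> B s \<subseteq> A s"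
  shows "discrete_family X S' B"
  unfolding discrete_family_def
proof
  fix x assume "x \<in> topspace X"
  then obtain V where V: "openin X V" "x \<in> V"
    "\<forall>s\<in>S. \<forall>t\<in>S. A s \<inter> V \<noteq> {} \<and> A t \<inter> V \<noteq> {} \<longrightarrow> s = t"
    using assms(1) unfolding discrete_family_def by meson
  have "s = t" if "s \<in> S'" "t \<in> S'" "B s \<inter> V \<noteq> {}" "B t \<inter> V \<noteq> {}" for s t
  proof -
    have "A s \<inter> V \<noteq> {}" "A t \<inter> V \<noteq> {}"
      using that assms(3) by blast+
    then show ?thesis
      using V(3) that(1,2) assms(2) by (meson subsetD)
  qed
  then show "\<exists>V. openin X V \<and> x \<in> V \<and>
      (\<forall>s\<in>S'. \<forall>t\<in>S'. B s \<inter> V \<noteq> {} \<and> B t \<inter> V \<noteq> {} \<longrightarrow> s = t)"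
    using V(1,2) by (intro exI[of _ V]) simp
qed

lemma collectionwise_normal_imp_normal_space:
  assumes "collectionwise_normal X"
  shows "normal_space X"
  unfolding normal_space_def
proof (intro allI impI)
  fix S T assume ST: "closedin X S \<and> closedin X T \<and> disjnt S T"
  show "\<exists>U V. openin X U \<and> openin X V \<and> S \<subseteq> U \<and> T \<subseteq> V \<and> disjnt U V"
  proof (cases "S = T")
    case True
    then have "S = {}" "T = {}"
      using ST by (auto simp: disjnt_def)
    then show ?thesis
      by (metis disjnt_empty1 empty_subsetI openin_empty)
  next
    case False
    have "discrete_collection X {S, T}"
      unfolding discrete_collection_def discrete_family_def
    proof
      fix x assume "x \<in> topspace X"
      define V where "V = (if x \<in> S then topspace X - T else topspace X - S)"
      have "openin X (topspace X - S)" "openin X (topspace X - T)"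
        using ST by (simp_all add: closedin_def)
      then have "openin X V" "x \<in> V" "V \<inter> S = {} \<or> V \<inter> T = {}"
        using ST \<open>x \<in> topspace X\<close> by (auto simp: V_def disjnt_def)
      then show "\<exists>V. openin X V \<and> x \<in> V \<and>
          (\<forall>A\<in>{S, T}. \<forall>B\<in>{S, T}. id A \<inter> V \<noteq> {} \<and> id B \<inter> V \<noteq> {} \<longrightarrow> A = B)"
        by (intro exI[of _ V]) auto
    qed
    moreover have "\<forall>A\<in>{S, T}. closedin X A"
      using ST by blast
    ultimately obtain U where U: "\<forall>A\<in>{S, T}. openin X (U A) \<and> A \<subseteq> U A" "discrete_family X {S, T} U"
      using assms[unfolded collectionwise_normal_def, THEN conjunct2, rule_format, of "{S, T}"] by blast
    have "disjnt (U S) (U T)"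
    proof (rule ccontr)
      assume "\<not> disjnt (U S) (U T)"
      then obtain z where z: "z \<in> U S" "z \<in> U T"
        by (auto simp: disjnt_def)
      then have "z \<in> topspace X"
        using U(1) openin_subset by blast
      then obtain V where V: "z \<in> V"
        "\<forall>A\<in>{S, T}. \<forall>B\<in>{S, T}. U A \<inter> V \<noteq> {} \<and> U B \<inter> V \<noteq> {} \<longrightarrow> A = B"
        using U(2) unfolding discrete_family_def by blast
      have "U S \<inter> V \<noteq> {}" "U T \<inter> V \<noteq> {}"
        using z V(1) by auto
      then have "S = T"
        using V(2) by (meson insertCI)
      with False show False ..
    qed
    then show ?thesis
      using U(1) by (intro exI[of _ "U S"] exI[of _ "U T"]) simp
  qed
qed

locale levelled_bump_family =
  fixes X :: "'a topology" and \<F> :: "'a set set" and lev :: "'a set \<Rightarrow> nat"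
    and N :: "'a set \<Rightarrow> 'a set" and \<phi> :: "'a set \<Rightarrow> 'a \<Rightarrow> real"
  assumes nbhd: "\<And>F. F \<in> \<F> \<Longrightarrow> F \<subseteq> N F \<and> N F \<subseteq> topspace X"
    and cover: "\<Union>\<F> = topspace X"
    and discrete_level: "\<And>n. discrete_family X {F\<in>\<F>. lev F = n} N"
    and bump_continuous: "\<And>F. F \<in> \<F> \<Longrightarrow> continuous_map X euclideanreal (\<phi> F)"
    and bump_range: "\<And>F x. F \<in> \<F> \<Longrightarrow> x \<in> topspace X \<Longrightarrow> 0 \<le> \<phi> F x \<and> \<phi> F x \<le> 1"
    and bump_one: "\<And>F x. F \<in> \<F> \<Longrightarrow> x \<in> F \<Longrightarrow> \<phi> F x = 1"
    and bump_zero: "\<And>F x. F \<in> \<F> \<Longrightarrow> x \<in> topspace X - N F \<Longrightarrow> \<phi> F x = 0"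
begin

definition level_bump :: "nat \<Rightarrow> 'a \<Rightarrow> real" where
  "level_bump n x = (\<Sum>F\<in>{F\<in>\<F>. lev F = n \<and> x \<in> N F}. \<phi> F x)"

text \<open>The mass not yet used up by the levels below \<open>n\<close>.\<close>
definition residual :: "nat \<Rightarrow> 'a \<Rightarrow> real" where
  "residual n x = (\<Prod>m<n. 1 - level_bump m x)"

definition pou :: "'a set \<Rightarrow> 'a \<Rightarrow> real" where
  "pou F x = \<phi> F x * residual (lev F) x"

lemma same_level_eq:
  assumes F: "F \<in> \<F>" "F' \<in> \<F>" "lev F = lev F'" and x: "x \<in> N F" "x \<in> N F'"
  shows "F = F'"
proof -
  have "x \<in> topspace X"
    using nbhd[OF F(1)] x(1) by blast
  then obtain V where V: "x \<in> V" "\<forall>G\<in>{G\<in>\<F>. lev G = lev F}. \<forall>G'\<in>{G\<in>\<F>. lev G = lev F}.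
       N G \<inter> V \<noteq> {} \<and> N G' \<inter> V \<noteq> {} \<longrightarrow> G = G'"
    using discrete_level[of "lev F"] unfolding discrete_family_def by meson
  moreover have "N F \<inter> V \<noteq> {}" "N F' \<inter> V \<noteq> {}"
    using x V(1) by auto
  ultimately show ?thesis
    using F by simp
qed

lemma level_bump_eq:
  assumes "F \<in> \<F>" "x \<in> N F"
  shows "level_bump (lev F) x = \<phi> F x"
proof -
  have "{G\<in>\<F>. lev G = lev F \<and> x \<in> N G} = {F}"
    using assms same_level_eq[of _ F x] by auto
  then show ?thesis
    by (simp add: level_bump_def)
qed

lemma level_bump_eq_0:
  "(\<And>F. F \<in> \<F> \<Longrightarrow> lev F = n \<Longrightarrow> x \<notin> N F) \<Longrightarrow> level_bump n x = 0"
  unfolding level_bump_def by (metis (mono_tags, lifting) empty_Collect_eq sum.empty)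

lemma level_bump_range:
  assumes "x \<in> topspace X"
  shows "0 \<le> level_bump n x \<and> level_bump n x \<le> 1"
proof (cases "\<exists>F\<in>\<F>. lev F = n \<and> x \<in> N F")
  case True
  then obtain F where F: "F \<in> \<F>" "lev F = n" "x \<in> N F"
    by blast
  then show ?thesis
    using level_bump_eq[OF F(1,3)] bump_range[OF F(1) assms] by simp
next
  case False
  then show ?thesis
    using level_bump_eq_0 by auto
qed

lemma continuous_map_level_bump: "continuous_map X euclideanreal (level_bump n)"
proof (rule continuous_map_locally_eq)
  fix x0 assume "x0 \<in> topspace X"
  then obtain W where W: "openin X W" "x0 \<in> W"
    "\<forall>F\<in>{F\<in>\<F>. lev F = n}. \<forall>F'\<in>{F\<in>\<F>. lev F = n}.
       N F \<inter> W \<noteq> {} \<and> N F' \<inter> W \<noteq> {} \<longrightarrow> F = F'"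
    using discrete_level[of n] unfolding discrete_family_def by blast
  show "\<exists>U g. openin X U \<and> x0 \<in> U \<and> continuous_map X euclideanreal g \<and> (\<forall>y\<in>U. level_bump n y = g y)"
  proof (cases "\<exists>F\<in>\<F>. lev F = n \<and> N F \<inter> W \<noteq> {}")
    case True
    then obtain F where F: "F \<in> \<F>" "lev F = n" "N F \<inter> W \<noteq> {}"
      by blast
    have "level_bump n y = \<phi> F y" if y: "y \<in> W" for y
    proof (cases "y \<in> N F")
      case True
      then show ?thesis
        using level_bump_eq[OF F(1) True] F(2) by simp
    next
      case False
      have "y \<in> topspace X"
        using W(1) y openin_subset by blast
      then have "\<phi> F y = 0"
        using bump_zero[OF F(1)] False by blast
      moreover have "level_bump n y = 0"
      proof (rule level_bump_eq_0)
        fix G assume "G \<in> \<F>" "lev G = n"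
        then show "y \<notin> N G"
          using W(3) F False y by blast
      qed
      ultimately show ?thesis
        by simp
    qed
    then show ?thesis
      using W(1,2) bump_continuous[OF F(1)] by (intro exI[of _ W] exI[of _ "\<phi> F"]) simp
  next
    case False
    have "level_bump n y = 0" if "y \<in> W" for y
      by (rule level_bump_eq_0) (use False that in blast)
    then show ?thesis
      using W(1,2) by (intro exI[of _ W] exI[of _ "\<lambda>_. 0"]) auto
  qed
qed

lemma residual_range:
  "x \<in> topspace X \<Longrightarrow> 0 \<le> residual n x \<and> residual n x \<le> 1"
  unfolding residual_def using level_bump_range by (auto intro!: prod_nonneg prod_le_1)

lemma continuous_map_residual: "continuous_map X euclideanreal (residual n)"
  unfolding residual_def
  by (intro continuous_map_prod continuous_map_diff continuous_map_level_bump) auto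

lemma residual_eq_0:
  assumes "F \<in> \<F>" "x \<in> F" "lev F < n"
  shows "residual n x = 0"
proof -
  have "level_bump (lev F) x = 1"
    using level_bump_eq[OF assms(1)] bump_one[OF assms(1,2)] nbhd[OF assms(1)] assms(2) by auto
  then show ?thesis
    unfolding residual_def using assms(3) by (intro prod_zero bexI[of _ "lev F"]) auto
qed

lemma sum_level_bump_residual:
  "(\<Sum>m<n. level_bump m x * residual m x) = 1 - residual n x"
  by (induction n) (simp_all add: residual_def algebra_simps)

lemma pou_eq_0:
  "F \<in> \<F> \<Longrightarrow> x \<in> topspace X \<Longrightarrow> x \<notin> N F \<Longrightarrow> pou F x = 0"
  by (simp add: pou_def bump_zero)

lemma has_sum_pou:
  assumes x: "x \<in> topspace X"
  shows "((\<lambda>F. pou F x) has_sum 1) \<F>"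
proof -
  have "x \<in> \<Union>\<F>"
    using cover x by simp
  then obtain F0 where F0: "F0 \<in> \<F>" "x \<in> F0"
    by blast
  define E where "E = {F\<in>\<F>. x \<in> N F \<and> lev F \<le> lev F0}"
  have inj: "inj_on lev E"
  proof (rule inj_onI)
    fix F F' assume "F \<in> E" "F' \<in> E" "lev F = lev F'"
    then show "F = F'"
      using same_level_eq[of F F' x] by (simp add: E_def)
  qed
  then have "finite E"
    by (rule inj_on_finite) (auto simp: E_def)
  moreover have "E \<subseteq> \<F>"
    by (auto simp: E_def)
  moreover have "pou F x = 0" if F: "F \<in> \<F> - E" for F
  proof (cases "x \<in> N F")
    case True
    then have "lev F0 < lev F"
      using F by (auto simp: E_def)
    then show ?thesis
      using residual_eq_0[OF F0] by (simp add: pou_def)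
  next
    case False
    then show ?thesis
      using pou_eq_0 F x by blast
  qed
  moreover have "(\<Sum>F\<in>E. pou F x) = 1"
  proof -
    have "(\<Sum>F\<in>E. pou F x) = (\<Sum>F\<in>E. level_bump (lev F) x * residual (lev F) x)"
      by (rule sum.cong) (auto simp: E_def pou_def level_bump_eq)
    also have "\<dots> = (\<Sum>n\<in>lev ` E. level_bump n x * residual n x)"
      by (rule sum.reindex[OF inj, unfolded comp_def, symmetric])
    also have "\<dots> = (\<Sum>n<Suc (lev F0). level_bump n x * residual n x)"
      by (rule sum.mono_neutral_left) (auto simp: E_def intro!: level_bump_eq_0)
    also have "\<dots> = 1"
      using sum_level_bump_residual residual_eq_0[OF F0] by simp
    finally show ?thesis .
  qed
  ultimately show ?thesis
    by (intro has_sum_finite_neutralI) auto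
qed

lemma partition_of_unity_pou:
  assumes "topspace X \<noteq> {}"
  shows "partition_of_unity X \<F> pou"
proof (rule partition_of_unityI)
  show "\<F> \<noteq> {}"
    using cover assms by (metis Union_empty)
  show "continuous_map X euclideanreal (pou F)" if "F \<in> \<F>" for F
    unfolding pou_def using bump_continuous[OF that] continuous_map_residual
    by (intro continuous_map_real_mult)
  show "0 \<le> pou F x" if "F \<in> \<F>" "x \<in> topspace X" for F x
    unfolding pou_def using bump_range[OF that] residual_range[OF that(2)] by simp
qed (rule has_sum_pou)

lemma carrier_pou_subset: "F \<in> \<F> \<Longrightarrow> carrier_pou X (pou F) \<subseteq> N F"
  using pou_eq_0 by (force simp: carrier_pou_def)

end

lemma sigma_discrete_levels:
  assumes "sigma_discrete X \<F>"
  shows "\<exists>lev :: 'a set \<Rightarrow> nat. \<forall>n. discrete_collection X {F\<in>\<F>. lev F = n}"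
proof -
  obtain G :: "nat \<Rightarrow> 'a set set" where G: "\<F> = (\<Union>n. G n)" "\<And>n. discrete_collection X (G n)"
    using assms unfolding sigma_discrete_def by blast
  define lev where "lev F = (LEAST n. F \<in> G n)" for F
  have "F \<in> G (lev F)" if "F \<in> \<F>" for F
  proof -
    have "\<exists>n. F \<in> G n"
      using that G(1) by blast
    then show ?thesis
      unfolding lev_def by (rule LeastI_ex)
  qed
  then have "discrete_collection X {F\<in>\<F>. lev F = n}" for n
    unfolding discrete_collection_def
    by (intro discrete_family_shrink[OF G(2)[of n, unfolded discrete_collection_def]]) auto
  then show ?thesis
    by (intro exI[of _ lev] allI)
qed

lemma collectionwise_normal_expand_levels:
  assumes cwn: "collectionwise_normal X" and closed: "\<And>F. F \<in> \<F> \<Longrightarrow> closedin X F"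
    and levels: "\<And>n. discrete_collection X {F\<in>\<F>. lev F = n}"
  shows "\<exists>Ob. (\<forall>F\<in>\<F>. openin X (Ob F) \<and> F \<subseteq> Ob F) \<and> (\<forall>n. discrete_family X {F\<in>\<F>. lev F = n} Ob)"
proof -
  have "\<forall>n. \<exists>Ob. (\<forall>F\<in>{F\<in>\<F>. lev F = n}. openin X (Ob F) \<and> F \<subseteq> Ob F) \<and>
      discrete_family X {F\<in>\<F>. lev F = n} Ob"
  proof
    fix n
    have "\<forall>F\<in>{F\<in>\<F>. lev F = n}. closedin X F"
      using closed by blast
    then show "\<exists>Ob. (\<forall>F\<in>{F\<in>\<F>. lev F = n}. openin X (Ob F) \<and> F \<subseteq> Ob F) \<and>
        discrete_family X {F\<in>\<F>. lev F = n} Ob"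
      using cwn[unfolded collectionwise_normal_def, THEN conjunct2, rule_format, of "{F\<in>\<F>. lev F = n}"]
        levels[of n] by blast
  qed
  from choice[OF this] obtain Ob where Ob: "\<And>n. (\<forall>F\<in>{F\<in>\<F>. lev F = n}. openin X (Ob n F) \<and> F \<subseteq> Ob n F) \<and>
      discrete_family X {F\<in>\<F>. lev F = n} (Ob n)"
    by blast
  show ?thesis
  proof (intro exI[of _ "\<lambda>F. Ob (lev F) F"] conjI ballI allI)
    show "openin X (Ob (lev F) F)" "F \<subseteq> Ob (lev F) F" if "F \<in> \<F>" for F
      using Ob[of "lev F"] that by simp_all
    show "discrete_family X {F\<in>\<F>. lev F = n} (\<lambda>F. Ob (lev F) F)" for n
      by (rule discrete_family_shrink[OF conjunct2[OF Ob[of n]]]) auto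
  qed
qed

lemma normal_space_Urysohn_bumps:
  assumes normal: "normal_space X" and closed: "\<And>F. F \<in> \<F> \<Longrightarrow> closedin X F"
    and nbhd: "\<And>F. F \<in> \<F> \<Longrightarrow> openin X (N F) \<and> F \<subseteq> N F"
  shows "\<exists>\<phi>. \<forall>F\<in>\<F>. continuous_map X euclideanreal (\<phi> F) \<and>
    (\<forall>x\<in>topspace X. 0 \<le> \<phi> F x \<and> \<phi> F x \<le> 1) \<and> (\<forall>x\<in>F. \<phi> F x = 1) \<and>
    (\<forall>x\<in>topspace X - N F. \<phi> F x = 0)"
proof -
  have "\<forall>F\<in>\<F>. \<exists>\<phi>. continuous_map X euclideanreal \<phi> \<and>
      (\<forall>x\<in>topspace X. 0 \<le> \<phi> x \<and> \<phi> x \<le> 1) \<and> (\<forall>x\<in>F. \<phi> x = 1) \<and>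
      (\<forall>x\<in>topspace X - N F. \<phi> x = 0)"
  proof
    fix F assume F: "F \<in> \<F>"
    show "\<exists>\<phi>. continuous_map X euclideanreal \<phi> \<and>
        (\<forall>x\<in>topspace X. 0 \<le> \<phi> x \<and> \<phi> x \<le> 1) \<and> (\<forall>x\<in>F. \<phi> x = 1) \<and>
        (\<forall>x\<in>topspace X - N F. \<phi> x = 0)"
      by (rule normal_space_Urysohn_bump[OF normal closed[OF F]
            conjunct1[OF nbhd[OF F]] conjunct2[OF nbhd[OF F]]])
  qed
  then show ?thesis
    by (rule bchoice)
qed

theorem small_partition_of_unity_if_sigma_discrete_closed_refinement:
  assumes cwn: "collectionwise_normal X" and oc: "open_cover X \<U>" and ne: "topspace X \<noteq> {}"
    and cr: "closed_refinement X \<F> \<U>" and sd: "sigma_discrete X \<F>"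
  shows "\<exists>f. small_partition_of_unity X \<U> \<F> f"
proof -
  have refines: "\<forall>F\<in>\<F>. closedin X F \<and> (\<exists>U\<in>\<U>. F \<subseteq> U)" and cover: "\<Union>\<F> = topspace X"
    using cr unfolding closed_refinement_def by simp_all
  then have closed: "\<And>F. F \<in> \<F> \<Longrightarrow> closedin X F"
    by simp
  obtain U where U: "\<forall>F\<in>\<F>. U F \<in> \<U> \<and> F \<subseteq> U F"
    using bchoice[of \<F> "\<lambda>F U. U \<in> \<U> \<and> F \<subseteq> U"] refines by meson
  from sigma_discrete_levels[OF sd]
  obtain lev :: "'a set \<Rightarrow> nat" where levels: "\<forall>n. discrete_collection X {F\<in>\<F>. lev F = n}" ..
  from collectionwise_normal_expand_levels[OF cwn closed levels[rule_format]]
  obtain Ob where Ob: "\<forall>F\<in>\<F>. openin X (Ob F) \<and> F \<subseteq> Ob F" "\<forall>n. discrete_family X {F\<in>\<F>. lev F = n} Ob"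
    by blast
  define N where "N F = Ob F \<inter> U F" for F
  have N: "openin X (N F) \<and> F \<subseteq> N F" "N F \<subseteq> U F" if "F \<in> \<F>" for F
    using Ob(1) U oc that unfolding N_def open_cover_def by auto
  from normal_space_Urysohn_bumps[OF collectionwise_normal_imp_normal_space[OF cwn] closed N(1)]
  obtain \<phi> where \<phi>: "\<forall>F\<in>\<F>. continuous_map X euclideanreal (\<phi> F) \<and>
    (\<forall>x\<in>topspace X. 0 \<le> \<phi> F x \<and> \<phi> F x \<le> 1) \<and> (\<forall>x\<in>F. \<phi> F x = 1) \<and>
    (\<forall>x\<in>topspace X - N F. \<phi> F x = 0)"
    by blast
  interpret levelled_bump_family X \<F> lev N \<phi>
  proof
    show "F \<subseteq> N F \<and> N F \<subseteq> topspace X" if "F \<in> \<F>" for F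
      using N(1)[OF that] openin_subset[of X "N F"] by simp
    show "\<Union>\<F> = topspace X"
      by (rule cover)
    show "discrete_family X {F\<in>\<F>. lev F = n} N" for n
      by (rule discrete_family_shrink[OF Ob(2)[rule_format, of n]]) (auto simp: N_def)
  qed (use \<phi> in auto)
  have "carrier_pou X (pou F) \<subseteq> U F" if "F \<in> \<F>" for F
    using carrier_pou_subset[OF that] N(2)[OF that] by blast
  then have "small_partition_of_unity X \<U> \<F> pou"
    unfolding small_partition_of_unity_def using partition_of_unity_pou[OF ne] U by blast
  then show ?thesis
    by blast
qed

theorem corollary4p2:
  fixes X :: "'a topology" and \<U> :: "'a set set"
  assumes "collectionwise_normal X" and "open_cover X \<U>" and "topspace X \<noteq> {}"
  shows "((\<exists>(T::'i set) f. small_partition_of_unity X \<U> T f) \<longrightarrow>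
            (\<exists>\<F>. closed_refinement X \<F> \<U> \<and> sigma_discrete X \<F>))
       \<and> ((\<exists>\<F>. closed_refinement X \<F> \<U> \<and> sigma_discrete X \<F>) \<longrightarrow>
            (\<exists>(T::'a set set) f. small_partition_of_unity X \<U> T f))"
  using sigma_discrete_closed_refinement_if_small_partition_of_unity
    small_partition_of_unity_if_sigma_discrete_closed_refinement[OF assms] by blast

end
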